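(* Let $\mathcal G$ be a finite-state CFG, let $0<p<1$, and suppose $\Pr_{term}(\mathcal G)\ge1-p$. Then there exist the following objects: - an inductive invariant $\mathsf{Inv}$ containing the initial state $\sigma_{init}$; - a function $\mathsf{SI}:\mathsf{Inv}\to\mathbb R$ with $\mathsf{SI}(\sigma_{init})\le p$, $\mathsf{SI}\ge0$, and $\mathsf{SI}$ a supermartingale function on $\mathsf{Inv}$; - a real $\epsilon>0$; - a function $U:\mathsf{Inv}\to\mathbb N$, bounded above by some $H$, with $U(\gamma)=0$ for every $\gamma\in\mathsf{Inv}$ that satisfies $\mathsf{SI}(\gamma)\ge1$ or $\gamma=\sigma_\bot$. Moreover, for every other state $(l,\mathbf x)\in\mathsf{Inv}$: - if it is an assignment or nondeterministic state, then $U(\sigma')<U(l,\mathbf x)$ for every successor $\sigma'$; - if it is a probabilistic state, then $\sum\mathsf{Pr}(l,l')[\mathbf x]>\epsilon$, where the sum ranges over the successors $(l',\mathbf x')$ with $U(l',\mathbf x')<U(l,\mathbf x)$.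
   Context: A probabilistic control flow graph (CFG) is a tuple $\mathcal G=(L,V,l_{init},\mathbf x_{init},\mapsto,G,\mathsf{Pr},\mathsf{Upd})$. $L$ is a finite set of locations, partitioned into assignment, nondeterministic and probabilistic locations. The variables range over $\mathbb Q$. The initial state is $\sigma_{init}=(l_{init},\mathbf x_{init})$. There are finitely many guarded transitions. At probabilistic locations, each outgoing transition $(l,l')$ carries a probability expression $\mathsf{Pr}(l,l')$ whose values are positive and sum to $1$ over the enabled transitions. Assignment locations have at most one outgoing transition, carrying an update of one variable by an arithmetic expression. A state is a pair $(l,\mathbf x)$. Every state has at least one, and finitely many, successors. Schedulers map finite paths ending in nondeterministic states to successors and induce probability measures $\mathbb P_{\mathfrak s}$ on runs. The terminal state is $\sigma_\bot=(l_{out},\mathbf 0)$. $\Pr_{term}(\mathcal G)=\inf_{\mathfrak s}\mathbb P_{\mathfrak s}[\text{run visits }\sigma_\bot]$. $\mathcal G$ is finite-state if the set of states reachable from the initial state is finite. An inductive invariant is a set of states closed under successors. A function $f:\mathsf{Inv}\to\mathbb R$ is a supermartingale function on $\mathsf{Inv}$ if, at every non-terminal $(l,\mathbf x)\in\mathsf{Inv}$: - at assignment or nondeterministic states, $f(l,\mathbf x)\ge f(\sigma')$ for every successor $\sigma'$; - at probabilistic states, $f(l,\mathbf x)\ge\sum\mathsf{Pr}(l,l')[\mathbf x]f(l',\mathbf x')$, summed over successors. *)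

theory Defs
  imports Complex_Main
begin

datatype lockind = AssignLoc | NondetLoc | ProbLoc

type_synonym 'v valuation = "'v \<Rightarrow> rat"
type_synonym ('l, 'v) state = "'l \<times> 'v valuation"

record ('l, 'v) pcfg =
  locs  :: "'l set"
  kind  :: "'l \<Rightarrow> lockind"
  linit :: 'l
  xinit :: "'v valuation"
  lout  :: 'l
  trans :: "('l \<times> 'l) set"
  guard :: "'l \<Rightarrow> 'l \<Rightarrow> 'v valuation \<Rightarrow> bool"
  prb   :: "'l \<Rightarrow> 'l \<Rightarrow> 'v valuation \<Rightarrow> real"
  upd   :: "'l \<Rightarrow> 'l \<Rightarrow> 'v \<times> ('v valuation \<Rightarrow> rat)"

definition init_state :: "('l, 'v, 'z) pcfg_scheme \<Rightarrow> ('l, 'v) state" where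
  "init_state G = (linit G, xinit G)"

definition term_state :: "('l, 'v, 'z) pcfg_scheme \<Rightarrow> ('l, 'v) state" where
  "term_state G = (lout G, (\<lambda>_. 0))"

definition enabled :: "('l, 'v, 'z) pcfg_scheme \<Rightarrow> 'l \<Rightarrow> 'v valuation \<Rightarrow> 'l set" where
  "enabled G l x = {l'. (l, l') \<in> trans G \<and> guard G l l' x}"

definition step_val :: "('l, 'v, 'z) pcfg_scheme \<Rightarrow> 'l \<Rightarrow> 'l \<Rightarrow> 'v valuation \<Rightarrow> 'v valuation" where
  "step_val G l l' x =
     (if kind G l = AssignLoc then x(fst (upd G l l') := snd (upd G l l') x) else x)"

definition succs :: "('l, 'v, 'z) pcfg_scheme \<Rightarrow> ('l, 'v) state \<Rightarrow> ('l, 'v) state set" where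
  "succs G \<sigma> = (\<lambda>l'. (l', step_val G (fst \<sigma>) l' (snd \<sigma>))) ` enabled G (fst \<sigma>) (snd \<sigma>)"

definition wf_pcfg :: "('l, 'v, 'z) pcfg_scheme \<Rightarrow> bool" where
  "wf_pcfg G \<longleftrightarrow>
     finite (locs G) \<and> linit G \<in> locs G \<and> lout G \<in> locs G \<and>
     trans G \<subseteq> locs G \<times> locs G \<and>
     (\<forall>l \<in> locs G. kind G l = AssignLoc \<longrightarrow> card {l'. (l, l') \<in> trans G} \<le> 1) \<and>
     (\<forall>l \<in> locs G. kind G l = ProbLoc \<longrightarrow>
        (\<forall>x. (\<forall>l' \<in> enabled G l x. prb G l l' x > 0) \<and>
             (\<Sum>l' \<in> enabled G l x. prb G l l' x) = 1)) \<and>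
     (\<forall>l \<in> locs G. \<forall>x. succs G (l, x) \<noteq> {})"

definition reachable :: "('l, 'v, 'z) pcfg_scheme \<Rightarrow> ('l, 'v) state set" where
  "reachable G = {\<sigma>. (init_state G, \<sigma>) \<in> {(a, b). b \<in> succs G a}\<^sup>*}"

definition finite_state :: "('l, 'v, 'z) pcfg_scheme \<Rightarrow> bool" where
  "finite_state G \<longleftrightarrow> finite (reachable G)"

type_synonym ('l, 'v) scheduler = "('l, 'v) state list \<Rightarrow> ('l, 'v) state"

definition valid_sched :: "('l, 'v, 'z) pcfg_scheme \<Rightarrow> ('l, 'v) scheduler \<Rightarrow> bool" where
  "valid_sched G s \<longleftrightarrow>
     (\<forall>\<pi>. \<pi> \<noteq> [] \<longrightarrow> fst (last \<pi>) \<in> locs G \<longrightarrow> kind G (fst (last \<pi>)) = NondetLoc \<longrightarrow>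
          s \<pi> \<in> succs G (last \<pi>))"

text \<open>Probability, under scheduler s, that the run extending the finite path \<pi> visits
  the terminal state within n further steps (or has already visited it at the end of \<pi>).\<close>
fun reach_within ::
  "('l, 'v, 'z) pcfg_scheme \<Rightarrow> ('l, 'v) scheduler \<Rightarrow> nat \<Rightarrow> ('l, 'v) state list \<Rightarrow> real" where
  "reach_within G s 0 \<pi> = (if last \<pi> = term_state G then 1 else 0)"
| "reach_within G s (Suc n) \<pi> =
     (if last \<pi> = term_state G then 1 else
      (case kind G (fst (last \<pi>)) of
         ProbLoc \<Rightarrow> (\<Sum>l' \<in> enabled G (fst (last \<pi>)) (snd (last \<pi>)).
              prb G (fst (last \<pi>)) l' (snd (last \<pi>)) *
              reach_within G s n (\<pi> @ [(l', step_val G (fst (last \<pi>)) l' (snd (last \<pi>)))]))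
       | NondetLoc \<Rightarrow> reach_within G s n (\<pi> @ [s \<pi>])
       | AssignLoc \<Rightarrow> reach_within G s n (\<pi> @ [SOME \<sigma>'. \<sigma>' \<in> succs G (last \<pi>)])))"

definition term_prob :: "('l, 'v, 'z) pcfg_scheme \<Rightarrow> ('l, 'v) scheduler \<Rightarrow> real" where
  "term_prob G s = (SUP n. reach_within G s n [init_state G])"

definition Pr_term :: "('l, 'v, 'z) pcfg_scheme \<Rightarrow> real" where
  "Pr_term G = (INF s \<in> {s. valid_sched G s}. term_prob G s)"

definition inductive_invariant :: "('l, 'v, 'z) pcfg_scheme \<Rightarrow> ('l, 'v) state set \<Rightarrow> bool" where
  "inductive_invariant G Inv \<longleftrightarrow> (\<forall>\<sigma> \<in> Inv. succs G \<sigma> \<subseteq> Inv)"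

definition supermartingale_on ::
  "('l, 'v, 'z) pcfg_scheme \<Rightarrow> ('l, 'v) state set \<Rightarrow> (('l, 'v) state \<Rightarrow> real) \<Rightarrow> bool" where
  "supermartingale_on G Inv f \<longleftrightarrow>
     (\<forall>l x. (l, x) \<in> Inv \<longrightarrow> (l, x) \<noteq> term_state G \<longrightarrow>
        ((kind G l = AssignLoc \<or> kind G l = NondetLoc) \<longrightarrow>
            (\<forall>\<sigma>' \<in> succs G (l, x). f (l, x) \<ge> f \<sigma>')) \<and>
        (kind G l = ProbLoc \<longrightarrow>
            f (l, x) \<ge> (\<Sum>l' \<in> enabled G l x. prb G l l' x * f (l', step_val G l l' x))))"

end

theory Submission
  imports Defs
begin

(* Let W be the least [0,1]-valued fixed point of the Bellman operator of the minimal
   termination probability: W = 1 at the terminal state, the expectation of W over the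
   successors at probabilistic states and the minimum of W over the successors otherwise.
   The scheduler that always moves to a W-minimal successor reaches the terminal state
   within n steps with probability at most W, so W(init) >= Pr_term >= 1 - p, and
   SI = 1 - W is a supermartingale since W is a fixed point.
   The states outside the positive attractor of the terminal state form a trap, and cutting
   W down to 0 there gives another prefixed point, so W vanishes outside the attractor.
   Hence every state with SI < 1 has a finite attractor level U, which decreases along all
   successors of assignment and nondeterministic states and along some successor of
   probabilistic ones. Finiteness of the reachable states bounds U and yields epsilon below
   every transition probability occurring there. *)

definition unit_funs :: "('a \<Rightarrow> real) set" where
  "unit_funs = {u. \<forall>x. 0 \<le> u x \<and> u x \<le> 1}"

definition unit_lfp :: "(('a \<Rightarrow> real) \<Rightarrow> 'a \<Rightarrow> real) \<Rightarrow> 'a \<Rightarrow> real" where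
  "unit_lfp F x = (INF u \<in> {u \<in> unit_funs. F u \<le> u}. u x)"

lemma unit_funsI: "(\<And>x. 0 \<le> u x \<and> u x \<le> 1) \<Longrightarrow> u \<in> unit_funs"
  and unit_funsD: "u \<in> unit_funs \<Longrightarrow> 0 \<le> u x \<and> u x \<le> 1"
  by (simp_all add: unit_funs_def)

lemma unit_lfp_lower:
  assumes "u \<in> unit_funs" and "F u \<le> u"
  shows "unit_lfp F \<le> u"
proof (rule le_funI)
  fix x
  have "bdd_below ((\<lambda>u. u x) ` {u \<in> unit_funs. F u \<le> u})"
    by (rule bdd_belowI[of _ 0]) (auto simp: unit_funs_def)
  then show "unit_lfp F x \<le> u x"
    unfolding unit_lfp_def by (rule cINF_lower) (use assms in auto)
qed

locale unit_monotone =
  fixes F :: "('a \<Rightarrow> real) \<Rightarrow> 'a \<Rightarrow> real"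
  assumes mono: "mono F"
    and unit_closed: "u \<in> unit_funs \<Longrightarrow> F u \<in> unit_funs"
begin

lemma one_unit_prefixed: "(\<lambda>_. 1) \<in> unit_funs" "F (\<lambda>_. 1) \<le> (\<lambda>_. 1)"
  using unit_closed[of "\<lambda>_. 1"] by (auto simp: unit_funs_def le_fun_def)

lemma unit_lfp_greatest:
  assumes "\<And>u. u \<in> unit_funs \<Longrightarrow> F u \<le> u \<Longrightarrow> c \<le> u x"
  shows "c \<le> unit_lfp F x"
proof -
  have "{u \<in> unit_funs. F u \<le> u} \<noteq> {}" using one_unit_prefixed by blast
  then show ?thesis
    unfolding unit_lfp_def by (rule cINF_greatest) (use assms in auto)
qed

lemma unit_lfp_unit: "unit_lfp F \<in> unit_funs"
proof (rule unit_funsI, rule conjI)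
  fix x
  show "0 \<le> unit_lfp F x" by (rule unit_lfp_greatest) (simp add: unit_funsD)
  show "unit_lfp F x \<le> 1"
    using unit_lfp_lower[of "\<lambda>_. 1" F, OF one_unit_prefixed] by (simp add: le_fun_def)
qed

lemma unit_lfp_prefixed: "F (unit_lfp F) \<le> unit_lfp F"
proof (rule le_funI, rule unit_lfp_greatest)
  fix x and u :: "'a \<Rightarrow> real"
  assume "u \<in> unit_funs" and "F u \<le> u"
  then have "F (unit_lfp F) \<le> u"
    using monoD[OF mono unit_lfp_lower] by (meson order_trans)
  then show "F (unit_lfp F) x \<le> u x" by (simp add: le_fun_def)
qed

lemma unit_lfp_fixpoint: "F (unit_lfp F) = unit_lfp F"
proof (rule antisym)
  show "unit_lfp F \<le> F (unit_lfp F)"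
    by (rule unit_lfp_lower)
      (use unit_closed[OF unit_lfp_unit] monoD[OF mono unit_lfp_prefixed] in auto)
qed (rule unit_lfp_prefixed)

end

lemma enabled_succ_in_succs: "l' \<in> enabled G l x \<Longrightarrow> (l', step_val G l l' x) \<in> succs G (l, x)"
  by (auto simp: succs_def)

lemma init_state_reachable: "init_state G \<in> reachable G"
  by (simp add: reachable_def)

lemma reachable_succs: "\<sigma> \<in> reachable G \<Longrightarrow> \<sigma>' \<in> succs G \<sigma> \<Longrightarrow> \<sigma>' \<in> reachable G"
  unfolding reachable_def by (auto intro: rtrancl_into_rtrancl)

lemma inductive_invariant_reachable: "inductive_invariant G (reachable G)"
  unfolding inductive_invariant_def using reachable_succs by blast

lemma Min_image_mono:
  fixes f g :: "'a \<Rightarrow> real"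
  assumes "finite S" "S \<noteq> {}" "\<And>s. s \<in> S \<Longrightarrow> f s \<le> g s"
  shows "Min (f ` S) \<le> Min (g ` S)"
  using assms by (auto simp: Min_le_iff intro!: Min.boundedI)

locale wf_cfg =
  fixes G :: "('l, 'v, 'z) pcfg_scheme"
  assumes wf: "wf_pcfg G"
begin

lemma finite_enabled: "finite (enabled G l x)"
proof (rule finite_subset)
  show "enabled G l x \<subseteq> locs G"
    using wf by (auto simp: wf_pcfg_def enabled_def)
  show "finite (locs G)" using wf by (simp add: wf_pcfg_def)
qed

lemma finite_succs: "finite (succs G \<sigma>)"
  by (simp add: succs_def finite_enabled)

lemma succs_nonempty: "fst \<sigma> \<in> locs G \<Longrightarrow> succs G \<sigma> \<noteq> {}"
  using wf by (cases \<sigma>) (auto simp: wf_pcfg_def)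

lemma succs_locs: "\<sigma>' \<in> succs G \<sigma> \<Longrightarrow> fst \<sigma>' \<in> locs G"
  using wf by (auto simp: wf_pcfg_def succs_def enabled_def)

lemma init_state_locs: "fst (init_state G) \<in> locs G"
  using wf by (simp add: wf_pcfg_def init_state_def)

lemma reachable_locs: "\<sigma> \<in> reachable G \<Longrightarrow> fst \<sigma> \<in> locs G"
  unfolding reachable_def
proof (clarify, induction rule: rtrancl_induct)
  case base then show ?case by (rule init_state_locs)
qed (use succs_locs in auto)

lemma prb_pos: "l \<in> locs G \<Longrightarrow> kind G l = ProbLoc \<Longrightarrow> l' \<in> enabled G l x \<Longrightarrow> 0 < prb G l l' x"
  using wf by (auto simp: wf_pcfg_def)

lemma prb_sum: "l \<in> locs G \<Longrightarrow> kind G l = ProbLoc \<Longrightarrow> (\<Sum>l' \<in> enabled G l x. prb G l l' x) = 1"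
  using wf by (auto simp: wf_pcfg_def)

lemma prb_le_sum:
  assumes "l \<in> locs G" "kind G l = ProbLoc" "l' \<in> S" "S \<subseteq> enabled G l x"
  shows "prb G l l' x \<le> (\<Sum>l'' \<in> S. prb G l l'' x)"
proof (rule member_le_sum)
  show "finite S" using assms(4) finite_enabled by (rule finite_subset)
  show "0 \<le> prb G l l'' x" if "l'' \<in> S - {l'}" for l''
    using prb_pos[of l l'' x] assms that by auto
qed (rule assms(3))

lemma prb_convex_le:
  assumes "l \<in> locs G" "kind G l = ProbLoc" "\<And>l'. l' \<in> enabled G l x \<Longrightarrow> f l' \<le> c"
  shows "(\<Sum>l' \<in> enabled G l x. prb G l l' x * f l') \<le> c"
proof -
  have "(\<Sum>l' \<in> enabled G l x. prb G l l' x * f l') \<le> (\<Sum>l' \<in> enabled G l x. prb G l l' x * c)"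
    using assms prb_pos by (intro sum_mono mult_left_mono) (auto intro: less_imp_le)
  also have "\<dots> = c" using prb_sum assms by (simp flip: sum_distrib_right)
  finally show ?thesis .
qed

lemma prb_weighted_nonneg:
  assumes "l \<in> locs G" "kind G l = ProbLoc" "\<And>l'. l' \<in> enabled G l x \<Longrightarrow> 0 \<le> f l'"
  shows "0 \<le> (\<Sum>l' \<in> enabled G l x. prb G l l' x * f l')"
proof (rule sum_nonneg)
  show "0 \<le> prb G l l' x * f l'" if "l' \<in> enabled G l x" for l'
    using prb_pos[of l l' x] assms that by simp
qed

lemma assign_succs_singleton:
  assumes "l \<in> locs G" "kind G l = AssignLoc" "\<sigma>' \<in> succs G (l, x)"
  shows "succs G (l, x) = {\<sigma>'}"
proof -
  have "card (succs G (l, x)) \<le> card (enabled G l x)"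
    by (simp add: succs_def card_image_le finite_enabled)
  also have "\<dots> \<le> card {l'. (l, l') \<in> trans G}"
  proof (rule card_mono)
    have "{l'. (l, l') \<in> trans G} \<subseteq> locs G" using wf by (auto simp: wf_pcfg_def)
    then show "finite {l'. (l, l') \<in> trans G}"
      using wf finite_subset by (auto simp: wf_pcfg_def)
  qed (auto simp: enabled_def)
  also have "\<dots> \<le> 1" using wf assms by (auto simp: wf_pcfg_def)
  finally have "card (succs G (l, x)) \<le> 1" .
  then show ?thesis
    using assms(3) card_le_Suc0_iff_eq[OF finite_succs] by auto
qed

(* Locations outside locs G carry no well-formedness guarantee (succs may be empty,
   prb need not be a distribution), so they get value 0. *)
fun bellman :: "(('l, 'v) state \<Rightarrow> real) \<Rightarrow> ('l, 'v) state \<Rightarrow> real" where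
  "bellman u (l, x) =
     (if (l, x) = term_state G then 1
      else if l \<notin> locs G then 0
      else if kind G l = ProbLoc then (\<Sum>l' \<in> enabled G l x. prb G l l' x * u (l', step_val G l l' x))
      else Min (u ` succs G (l, x)))"

declare bellman.simps [simp del]

lemma bellman_mono: "mono bellman"
proof (rule monoI, rule le_funI)
  fix u v :: "('l, 'v) state \<Rightarrow> real" and \<sigma> :: "('l, 'v) state"
  assume "u \<le> v"
  then have uv: "u \<tau> \<le> v \<tau>" for \<tau> by (rule le_funD)
  obtain l x where \<sigma>: "\<sigma> = (l, x)" by fastforce
  show "bellman u \<sigma> \<le> bellman v \<sigma>"
  proof (cases "(l, x) = term_state G \<or> l \<notin> locs G")
    case True
    then show ?thesis unfolding \<sigma> bellman.simps by auto
  next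
    case False
    show ?thesis
    proof (cases "kind G l = ProbLoc")
      case True
      have "(\<Sum>l' \<in> enabled G l x. prb G l l' x * u (l', step_val G l l' x))
          \<le> (\<Sum>l' \<in> enabled G l x. prb G l l' x * v (l', step_val G l l' x))"
        using False True prb_pos uv by (intro sum_mono mult_left_mono) (auto intro: less_imp_le)
      then show ?thesis using False True unfolding \<sigma> bellman.simps by simp
    next
      case nonprob: False
      have "Min (u ` succs G (l, x)) \<le> Min (v ` succs G (l, x))"
        using False finite_succs succs_nonempty[of "(l, x)"] uv by (intro Min_image_mono) auto
      then show ?thesis using False nonprob unfolding \<sigma> bellman.simps by simp
    qed
  qed
qed

lemma bellman_unit: "u \<in> unit_funs \<Longrightarrow> bellman u \<in> unit_funs"
proof (rule unit_funsI)
  fix \<sigma> :: "('l, 'v) state" assume "u \<in> unit_funs"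
  then have u: "0 \<le> u \<tau>" "u \<tau> \<le> 1" for \<tau> by (simp_all add: unit_funsD)
  obtain l x where \<sigma>: "\<sigma> = (l, x)" by fastforce
  show "0 \<le> bellman u \<sigma> \<and> bellman u \<sigma> \<le> 1"
  proof (cases "(l, x) = term_state G \<or> l \<notin> locs G")
    case True
    then show ?thesis unfolding \<sigma> bellman.simps by auto
  next
    case False
    show ?thesis
    proof (cases "kind G l = ProbLoc")
      case True
      have "0 \<le> (\<Sum>l' \<in> enabled G l x. prb G l l' x * u (l', step_val G l l' x))"
        by (rule prb_weighted_nonneg) (use False True u in auto)
      moreover have "(\<Sum>l' \<in> enabled G l x. prb G l l' x * u (l', step_val G l l' x)) \<le> 1"
        by (rule prb_convex_le) (use False True u in auto)
      ultimately show ?thesis using False True unfolding \<sigma> bellman.simps by simp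
    next
      case nonprob: False
      have "Min (u ` succs G (l, x)) \<in> u ` succs G (l, x)"
        using False finite_succs succs_nonempty[of "(l, x)"] by simp
      then show ?thesis using False nonprob u unfolding \<sigma> bellman.simps by auto
    qed
  qed
qed

sublocale bellman: unit_monotone bellman
  by unfold_locales (use bellman_mono bellman_unit in auto)

definition term_value :: "('l, 'v) state \<Rightarrow> real" where
  "term_value = unit_lfp bellman"

lemma term_value_nonneg: "0 \<le> term_value \<sigma>"
  and term_value_le_1: "term_value \<sigma> \<le> 1"
  using unit_funsD[OF bellman.unit_lfp_unit] by (simp_all add: term_value_def)

lemma bellman_term_value: "bellman term_value = term_value"
  unfolding term_value_def by (rule bellman.unit_lfp_fixpoint)

lemma term_value_term_state: "term_value (term_state G) = 1"
proof -
  have "bellman term_value (term_state G) = 1" by (simp add: term_state_def bellman.simps)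
  then show ?thesis by (simp add: bellman_term_value)
qed

lemma term_value_prob:
  assumes "l \<in> locs G" "(l, x) \<noteq> term_state G" "kind G l = ProbLoc"
  shows "term_value (l, x) = (\<Sum>l' \<in> enabled G l x. prb G l l' x * term_value (l', step_val G l l' x))"
proof -
  have "term_value (l, x) = bellman term_value (l, x)" by (simp add: bellman_term_value)
  also have "\<dots> = (\<Sum>l' \<in> enabled G l x. prb G l l' x * term_value (l', step_val G l l' x))"
    using assms by (simp add: bellman.simps)
  finally show ?thesis .
qed

lemma term_value_nonprob:
  assumes "l \<in> locs G" "(l, x) \<noteq> term_state G" "kind G l \<noteq> ProbLoc"
  shows "term_value (l, x) = Min (term_value ` succs G (l, x))"
proof -
  have "term_value (l, x) = bellman term_value (l, x)" by (simp add: bellman_term_value)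
  also have "\<dots> = Min (term_value ` succs G (l, x))"
    using assms by (simp add: bellman.simps)
  finally show ?thesis .
qed

(* attractor n: the states from which every scheduler reaches term_state G within n steps
   with positive probability. *)
primrec attractor :: "nat \<Rightarrow> ('l, 'v) state set" where
  "attractor 0 = {term_state G}"
| "attractor (Suc n) = attractor n \<union> {(l, x). l \<in> locs G \<and>
     (if kind G l = ProbLoc then \<exists>l' \<in> enabled G l x. (l', step_val G l l' x) \<in> attractor n
      else succs G (l, x) \<subseteq> attractor n)}"

definition attracted :: "('l, 'v) state set" where
  "attracted = (\<Union>n. attractor n)"

lemma attractor_mono: "mono attractor"
  by (rule monoI, rule lift_Suc_mono_le) auto

lemma finite_subset_attractor:
  assumes "finite S" "S \<subseteq> attracted"
  obtains n where "S \<subseteq> attractor n"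
proof (rule finite_subset_Union_chain[of S "range attractor" UNIV])
  show "subset.chain UNIV (range attractor)"
    unfolding subset.chain_def using nat_le_linear monoD[OF attractor_mono] by blast
qed (use assms in \<open>auto simp: attracted_def\<close>)

lemma term_state_attracted: "term_state G \<in> attracted"
  by (auto simp: attracted_def intro: exI[of _ 0])

lemma attracted_prob_step:
  assumes "l \<in> locs G" "kind G l = ProbLoc" "l' \<in> enabled G l x"
    and "(l', step_val G l l' x) \<in> attracted"
  shows "(l, x) \<in> attracted"
proof -
  obtain n where "(l', step_val G l l' x) \<in> attractor n"
    using assms(4) by (auto simp: attracted_def)
  then have "(l, x) \<in> attractor (Suc n)" using assms(1-3) by auto
  then show ?thesis unfolding attracted_def by blast
qed

lemma attracted_nonprob_step:
  assumes "l \<in> locs G" "kind G l \<noteq> ProbLoc" "succs G (l, x) \<subseteq> attracted"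
  shows "(l, x) \<in> attracted"
proof -
  obtain n where "succs G (l, x) \<subseteq> attractor n"
    using finite_subset_attractor[OF finite_succs assms(3)] .
  then have "(l, x) \<in> attractor (Suc n)" using assms(1,2) by auto
  then show ?thesis unfolding attracted_def by blast
qed

lemma bellman_outside_attracted:
  assumes "\<And>\<tau>. \<tau> \<notin> attracted \<Longrightarrow> u \<tau> = 0" and "\<sigma> \<notin> attracted"
  shows "bellman u \<sigma> \<le> 0"
proof -
  obtain l x where \<sigma>: "\<sigma> = (l, x)" by fastforce
  have nonterm: "(l, x) \<noteq> term_state G" using assms(2) term_state_attracted \<sigma> by auto
  show ?thesis
  proof (cases "l \<in> locs G")
    case False
    then show ?thesis using nonterm unfolding \<sigma> bellman.simps by simp
  next
    case True
    show ?thesis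
    proof (cases "kind G l = ProbLoc")
      case prob: True
      have "(\<Sum>l' \<in> enabled G l x. prb G l l' x * u (l', step_val G l l' x)) = 0"
        using attracted_prob_step[OF True prob] assms \<sigma> by (intro sum.neutral) auto
      then show ?thesis using nonterm True prob unfolding \<sigma> bellman.simps by simp
    next
      case nonprob: False
      obtain \<tau> where \<tau>: "\<tau> \<in> succs G (l, x)" "\<tau> \<notin> attracted"
        using attracted_nonprob_step[OF True nonprob] assms(2) \<sigma> by blast
      then have "Min (u ` succs G (l, x)) \<le> u \<tau>" using finite_succs by simp
      then show ?thesis using \<tau> assms(1) nonterm True nonprob unfolding \<sigma> bellman.simps by simp
    qed
  qed
qed

lemma term_value_outside_attracted:
  assumes "\<sigma> \<notin> attracted"
  shows "term_value \<sigma> = 0"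
proof -
  define u where "u \<tau> = (if \<tau> \<in> attracted then term_value \<tau> else 0)" for \<tau>
  have u_le: "u \<le> term_value" by (simp add: u_def le_fun_def term_value_nonneg)
  have "u \<in> unit_funs" by (rule unit_funsI) (simp add: u_def term_value_nonneg term_value_le_1)
  moreover have "bellman u \<le> u"
  proof (rule le_funI)
    fix \<tau>
    show "bellman u \<tau> \<le> u \<tau>"
    proof (cases "\<tau> \<in> attracted")
      case True
      have "bellman u \<tau> \<le> bellman term_value \<tau>"
        using monoD[OF bellman_mono u_le] by (rule le_funD)
      then show ?thesis using True by (simp add: u_def bellman_term_value)
    next
      case False
      then show ?thesis using bellman_outside_attracted[of u \<tau>] by (simp add: u_def)
    qed
  qed
  ultimately have "term_value \<le> u" unfolding term_value_def by (rule unit_lfp_lower)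
  then show ?thesis
    using assms term_value_nonneg[of \<sigma>] le_funD[of term_value u \<sigma>] by (simp add: u_def)
qed

(* The LEAST is unspecified for states outside attracted; those have term_value 0
   by term_value_outside_attracted, so the first branch covers them. *)
definition ranking :: "('l, 'v) state \<Rightarrow> nat" where
  "ranking \<sigma> = (if term_value \<sigma> = 0 then 0 else LEAST n. \<sigma> \<in> attractor n)"

lemma ranking_zero: "term_value \<sigma> = 0 \<Longrightarrow> ranking \<sigma> = 0"
  by (simp add: ranking_def)

lemma ranking_le: "\<sigma> \<in> attractor n \<Longrightarrow> ranking \<sigma> \<le> n"
  unfolding ranking_def by (auto intro: Least_le)

lemma ranking_term_state: "ranking (term_state G) = 0"
  using ranking_le[of "term_state G" 0] by simp

lemma ranking_positive_value:
  assumes "term_value \<sigma> \<noteq> 0" and "\<sigma> \<noteq> term_state G"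
  obtains n where "ranking \<sigma> = Suc n" "\<sigma> \<in> attractor (Suc n)" "\<sigma> \<notin> attractor n"
proof -
  let ?r = "LEAST n. \<sigma> \<in> attractor n"
  have "\<sigma> \<in> attracted" using term_value_outside_attracted assms(1) by blast
  then obtain m where "\<sigma> \<in> attractor m" unfolding attracted_def by blast
  then have in_r: "\<sigma> \<in> attractor ?r" by (rule LeastI)
  then obtain n where n: "?r = Suc n" using assms(2) by (cases ?r) auto
  then have "\<sigma> \<notin> attractor n" using not_less_Least[of n "\<lambda>n. \<sigma> \<in> attractor n"] by simp
  then show thesis using that in_r n assms(1) by (simp add: ranking_def)
qed

lemma ranking_decreasing_nonprob:
  assumes "term_value (l, x) \<noteq> 0" "(l, x) \<noteq> term_state G" "kind G l \<noteq> ProbLoc"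
    and "\<sigma>' \<in> succs G (l, x)"
  shows "ranking \<sigma>' < ranking (l, x)"
proof -
  obtain n where n: "ranking (l, x) = Suc n" "(l, x) \<in> attractor (Suc n)" "(l, x) \<notin> attractor n"
    using ranking_positive_value[OF assms(1,2)] .
  then have "\<sigma>' \<in> attractor n" using assms(3,4) by auto
  then show ?thesis using ranking_le n(1) by (simp add: le_imp_less_Suc)
qed

lemma ranking_decreasing_prob:
  assumes "term_value (l, x) \<noteq> 0" "(l, x) \<noteq> term_state G" "kind G l = ProbLoc"
  obtains l' where "l' \<in> enabled G l x" "ranking (l', step_val G l l' x) < ranking (l, x)"
proof -
  obtain n where n: "ranking (l, x) = Suc n" "(l, x) \<in> attractor (Suc n)" "(l, x) \<notin> attractor n"
    using ranking_positive_value[OF assms(1,2)] .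
  then obtain l' where "l' \<in> enabled G l x" "(l', step_val G l l' x) \<in> attractor n"
    using assms(3) by auto
  then show thesis using that ranking_le n(1) by (simp add: le_imp_less_Suc)
qed

lemma some_succ_in_succs: "fst \<sigma> \<in> locs G \<Longrightarrow> (SOME \<sigma>'. \<sigma>' \<in> succs G \<sigma>) \<in> succs G \<sigma>"
  using succs_nonempty[of \<sigma>] some_in_eq by blast

lemma sched_succ_in_succs:
  "valid_sched G s \<Longrightarrow> \<pi> \<noteq> [] \<Longrightarrow> fst (last \<pi>) \<in> locs G \<Longrightarrow> kind G (fst (last \<pi>)) = NondetLoc
   \<Longrightarrow> s \<pi> \<in> succs G (last \<pi>)"
  by (simp add: valid_sched_def)

lemma reach_within_nonneg:
  assumes "valid_sched G s" "\<pi> \<noteq> []" "fst (last \<pi>) \<in> locs G"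
  shows "0 \<le> reach_within G s n \<pi>"
  using assms(2,3)
proof (induction n arbitrary: \<pi>)
  case (Suc n)
  obtain l x where last: "last \<pi> = (l, x)" by fastforce
  have IH: "0 \<le> reach_within G s n (\<pi> @ [\<sigma>'])" if "\<sigma>' \<in> succs G (l, x)" for \<sigma>'
    using Suc.IH[of "\<pi> @ [\<sigma>']"] succs_locs[OF that] by simp
  have l: "l \<in> locs G" using Suc.prems last by simp
  show ?case
  proof (cases "kind G l")
    case ProbLoc
    have "0 \<le> (\<Sum>l' \<in> enabled G l x. prb G l l' x * reach_within G s n (\<pi> @ [(l', step_val G l l' x)]))"
      using l ProbLoc IH[OF enabled_succ_in_succs] by (rule prb_weighted_nonneg)
    then show ?thesis using ProbLoc last by simp
  next
    case NondetLoc
    then show ?thesis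
      using IH sched_succ_in_succs[OF assms(1) Suc.prems] last by simp
  next
    case AssignLoc
    then show ?thesis using IH some_succ_in_succs[of "(l, x)"] l last by simp
  qed
qed simp

lemma reach_within_le_supersolution:
  assumes s: "valid_sched G s"
    and nonneg: "\<And>\<sigma>. 0 \<le> v \<sigma>"
    and at_term: "1 \<le> v (term_state G)"
    and prob: "\<And>l x. l \<in> locs G \<Longrightarrow> (l, x) \<noteq> term_state G \<Longrightarrow> kind G l = ProbLoc \<Longrightarrow>
      (\<Sum>l' \<in> enabled G l x. prb G l l' x * v (l', step_val G l l' x)) \<le> v (l, x)"
    and nondet: "\<And>\<pi>. fst (last \<pi>) \<in> locs G \<Longrightarrow> last \<pi> \<noteq> term_state G \<Longrightarrow>
      kind G (fst (last \<pi>)) = NondetLoc \<Longrightarrow> v (s \<pi>) \<le> v (last \<pi>)"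
    and assign: "\<And>l x \<sigma>'. l \<in> locs G \<Longrightarrow> (l, x) \<noteq> term_state G \<Longrightarrow> kind G l = AssignLoc \<Longrightarrow>
      \<sigma>' \<in> succs G (l, x) \<Longrightarrow> v \<sigma>' \<le> v (l, x)"
  shows "\<pi> \<noteq> [] \<Longrightarrow> fst (last \<pi>) \<in> locs G \<Longrightarrow> reach_within G s n \<pi> \<le> v (last \<pi>)"
proof (induction n arbitrary: \<pi>)
  case 0
  then show ?case using nonneg at_term by simp
next
  case (Suc n)
  obtain l x where last: "last \<pi> = (l, x)" by fastforce
  have IH: "reach_within G s n (\<pi> @ [\<sigma>']) \<le> v \<sigma>'" if "\<sigma>' \<in> succs G (l, x)" for \<sigma>'
    using Suc.IH[of "\<pi> @ [\<sigma>']"] succs_locs[OF that] by simp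
  have l: "l \<in> locs G" using Suc.prems last by simp
  show ?case
  proof (cases "last \<pi> = term_state G")
    case True
    then show ?thesis using at_term by simp
  next
    case nonterm: False
    show ?thesis
    proof (cases "kind G l")
      case ProbLoc
      have "(\<Sum>l' \<in> enabled G l x. prb G l l' x * reach_within G s n (\<pi> @ [(l', step_val G l l' x)]))
          \<le> (\<Sum>l' \<in> enabled G l x. prb G l l' x * v (l', step_val G l l' x))"
        using prb_pos[OF l ProbLoc] IH[OF enabled_succ_in_succs]
        by (intro sum_mono mult_left_mono) (auto intro: less_imp_le)
      also have "\<dots> \<le> v (l, x)" using prob l nonterm last ProbLoc by simp
      finally show ?thesis using nonterm ProbLoc last by simp
    next
      case NondetLoc
      have "s \<pi> \<in> succs G (l, x)" using sched_succ_in_succs[OF s Suc.prems] NondetLoc last by simp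
      then have "reach_within G s n (\<pi> @ [s \<pi>]) \<le> v (last \<pi>)"
        using IH nondet[OF Suc.prems(2)] nonterm NondetLoc last by (metis fst_conv order_trans)
      then show ?thesis using nonterm NondetLoc last by simp
    next
      case AssignLoc
      define \<sigma>' where "\<sigma>' = (SOME \<sigma>'. \<sigma>' \<in> succs G (l, x))"
      have "\<sigma>' \<in> succs G (l, x)" using some_succ_in_succs l unfolding \<sigma>'_def by simp
      then have "reach_within G s n (\<pi> @ [\<sigma>']) \<le> v (l, x)"
        using IH assign[OF l nonterm[unfolded last] AssignLoc] order_trans by blast
      then show ?thesis using nonterm AssignLoc last by (simp add: \<sigma>'_def)
    qed
  qed
qed

lemma reach_within_le_1:
  "valid_sched G s \<Longrightarrow> \<pi> \<noteq> [] \<Longrightarrow> fst (last \<pi>) \<in> locs G \<Longrightarrow> reach_within G s n \<pi> \<le> 1"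
  by (rule reach_within_le_supersolution[where v = "\<lambda>_. 1"]) (auto simp: prb_sum)

lemma term_prob_nonneg:
  assumes "valid_sched G s"
  shows "0 \<le> term_prob G s"
proof -
  have "bdd_above (range (\<lambda>n. reach_within G s n [init_state G]))"
    using reach_within_le_1[OF assms] init_state_locs by (intro bdd_aboveI[of _ 1]) auto
  then have "reach_within G s 0 [init_state G] \<le> term_prob G s"
    unfolding term_prob_def by (rule cSUP_upper[OF UNIV_I])
  moreover have "0 \<le> reach_within G s 0 [init_state G]"
    using reach_within_nonneg[OF assms] init_state_locs by simp
  ultimately show ?thesis by linarith
qed

definition greedy_sched :: "('l, 'v) scheduler" where
  "greedy_sched \<pi> = arg_min_on term_value (succs G (last \<pi>))"

lemma greedy_sched_valid: "valid_sched G greedy_sched"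
  unfolding valid_sched_def greedy_sched_def
  using arg_min_if_finite(1)[OF finite_succs succs_nonempty] by blast

lemma term_value_arg_min_succs:
  assumes "fst \<sigma> \<in> locs G" "\<sigma> \<noteq> term_state G" "kind G (fst \<sigma>) \<noteq> ProbLoc"
  shows "term_value (arg_min_on term_value (succs G \<sigma>)) \<le> term_value \<sigma>"
proof -
  note nonempty = succs_nonempty[OF assms(1)]
  have "term_value (arg_min_on term_value (succs G \<sigma>)) \<le> Min (term_value ` succs G \<sigma>)"
    using arg_min_least[OF finite_succs nonempty] finite_succs nonempty by (intro Min.boundedI) auto
  also have "\<dots> = term_value \<sigma>"
    using term_value_nonprob[of "fst \<sigma>" "snd \<sigma>"] assms by simp
  finally show ?thesis .
qed

lemma reach_within_greedy_sched_le:
  assumes "\<pi> \<noteq> []" "fst (last \<pi>) \<in> locs G"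
  shows "reach_within G greedy_sched n \<pi> \<le> term_value (last \<pi>)"
proof -
  have at_term: "1 \<le> term_value (term_state G)" by (simp add: term_value_term_state)
  have prob: "(\<Sum>l' \<in> enabled G l x. prb G l l' x * term_value (l', step_val G l l' x)) \<le> term_value (l, x)"
    if "l \<in> locs G" "(l, x) \<noteq> term_state G" "kind G l = ProbLoc" for l x
    using term_value_prob[OF that] by simp
  have nondet: "term_value (greedy_sched \<pi>) \<le> term_value (last \<pi>)"
    if "fst (last \<pi>) \<in> locs G" "last \<pi> \<noteq> term_state G" "kind G (fst (last \<pi>)) = NondetLoc" for \<pi>
    unfolding greedy_sched_def using term_value_arg_min_succs that by simp
  have assign: "term_value \<sigma>' \<le> term_value (l, x)"
    if "l \<in> locs G" "(l, x) \<noteq> term_state G" "kind G l = AssignLoc" "\<sigma>' \<in> succs G (l, x)" for l x \<sigma>'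
    using term_value_nonprob[of l x] assign_succs_singleton[OF that(1,3,4)] that by simp
  show ?thesis
    by (rule reach_within_le_supersolution[OF greedy_sched_valid term_value_nonneg at_term
          prob nondet assign assms])
qed

lemma Pr_term_le_term_value: "Pr_term G \<le> term_value (init_state G)"
proof -
  have "Pr_term G \<le> term_prob G greedy_sched"
    unfolding Pr_term_def
    by (rule cINF_lower) (auto intro: greedy_sched_valid bdd_belowI[of _ 0] term_prob_nonneg)
  also have "\<dots> \<le> term_value (init_state G)"
    unfolding term_prob_def
    using reach_within_greedy_sched_le[of "[init_state G]"] init_state_locs by (intro cSUP_least) auto
  finally show ?thesis .
qed

lemma supermartingale_one_minus_term_value:
  assumes "\<forall>\<sigma> \<in> Inv. fst \<sigma> \<in> locs G"
  shows "supermartingale_on G Inv (\<lambda>\<sigma>. 1 - term_value \<sigma>)"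
  unfolding supermartingale_on_def
proof (intro allI impI conjI ballI)
  fix l x assume "(l, x) \<in> Inv" and nonterm: "(l, x) \<noteq> term_state G"
  then have l: "l \<in> locs G" using assms by auto
  show "1 - term_value \<sigma>' \<le> 1 - term_value (l, x)"
    if "kind G l = AssignLoc \<or> kind G l = NondetLoc" "\<sigma>' \<in> succs G (l, x)" for \<sigma>'
    using term_value_nonprob[OF l nonterm] finite_succs that by auto
  show "(\<Sum>l' \<in> enabled G l x. prb G l l' x * (1 - term_value (l', step_val G l l' x)))
      \<le> 1 - term_value (l, x)" if "kind G l = ProbLoc"
    using term_value_prob[OF l nonterm that] prb_sum[OF l that]
    by (simp add: right_diff_distrib sum_subtractf)
qed

lemma uniform_prb_lower_bound:
  assumes "finite Inv" "\<forall>\<sigma> \<in> Inv. fst \<sigma> \<in> locs G"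
  obtains \<epsilon> :: real where "0 < \<epsilon>"
    "\<And>l x l'. (l, x) \<in> Inv \<Longrightarrow> kind G l = ProbLoc \<Longrightarrow> l' \<in> enabled G l x \<Longrightarrow> \<epsilon> < prb G l l' x"
proof -
  define P where "P = insert 1 (\<Union>(l, x) \<in> Inv \<inter> {\<sigma>. kind G (fst \<sigma>) = ProbLoc}.
    (\<lambda>l'. prb G l l' x) ` enabled G l x)"
  have fin: "finite P" using assms(1) finite_enabled by (auto simp: P_def)
  have "0 < q" if "q \<in> P" for q using that assms(2) prb_pos by (auto simp: P_def)
  then have "0 < Min P" using Min_in[OF fin] by (simp add: P_def)
  moreover have "prb G l l' x \<in> P"
    if "(l, x) \<in> Inv" "kind G l = ProbLoc" "l' \<in> enabled G l x" for l x l'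
    using that by (force simp: P_def)
  ultimately show thesis
    using Min_le[OF fin] by (intro that[of "Min P / 2"]) force+
qed

lemma prb_mass_ranking_decreasing:
  assumes "l \<in> locs G" "term_value (l, x) \<noteq> 0" "(l, x) \<noteq> term_state G" "kind G l = ProbLoc"
    and "\<And>l'. l' \<in> enabled G l x \<Longrightarrow> \<epsilon> < prb G l l' x"
  shows "\<epsilon> < (\<Sum>l' \<in> {l' \<in> enabled G l x. ranking (l', step_val G l l' x) < ranking (l, x)}. prb G l l' x)"
proof -
  obtain l' where l': "l' \<in> enabled G l x" "ranking (l', step_val G l l' x) < ranking (l, x)"
    using ranking_decreasing_prob[OF assms(2-4)] .
  have "\<epsilon> < prb G l l' x" using l'(1) by (rule assms(5))
  also have "\<dots> \<le> (\<Sum>l' \<in> {l' \<in> enabled G l x. ranking (l', step_val G l l' x) < ranking (l, x)}. prb G l l' x)"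
    using l' by (intro prb_le_sum[OF assms(1,4)]) auto
  finally show ?thesis .
qed

end

theorem mainTheorem8:
  fixes G :: "('l, 'v :: finite) pcfg" and p :: real
  assumes "wf_pcfg G"
    and "finite_state G"
    and "0 < p" and "p < 1"
    and "Pr_term G \<ge> 1 - p"
  shows "\<exists>Inv SI (\<epsilon>::real) (U :: ('l, 'v) state \<Rightarrow> nat).
     inductive_invariant G Inv \<and> init_state G \<in> Inv \<and>
     SI (init_state G) \<le> p \<and> (\<forall>\<gamma> \<in> Inv. SI \<gamma> \<ge> 0) \<and> supermartingale_on G Inv SI \<and>
     \<epsilon> > 0 \<and>
     (\<exists>H. \<forall>\<gamma> \<in> Inv. U \<gamma> \<le> H) \<and>
     (\<forall>\<gamma> \<in> Inv. (SI \<gamma> \<ge> 1 \<or> \<gamma> = term_state G) \<longrightarrow> U \<gamma> = 0) \<and>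
     (\<forall>l x. (l, x) \<in> Inv \<longrightarrow> \<not> (SI (l, x) \<ge> 1 \<or> (l, x) = term_state G) \<longrightarrow>
        ((kind G l = AssignLoc \<or> kind G l = NondetLoc) \<longrightarrow>
            (\<forall>\<sigma>' \<in> succs G (l, x). U \<sigma>' < U (l, x))) \<and>
        (kind G l = ProbLoc \<longrightarrow>
            (\<Sum>l' \<in> {l' \<in> enabled G l x. U (l', step_val G l l' x) < U (l, x)}.
                prb G l l' x) > \<epsilon>))"
proof -
  interpret wf_cfg G by unfold_locales (rule assms(1))
  have fin: "finite (reachable G)" using assms(2) by (simp add: finite_state_def)
  have locs: "\<forall>\<sigma> \<in> reachable G. fst \<sigma> \<in> locs G" using reachable_locs by blast
  obtain \<epsilon> where \<epsilon>: "0 < \<epsilon>"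
    "\<And>l x l'. (l, x) \<in> reachable G \<Longrightarrow> kind G l = ProbLoc \<Longrightarrow> l' \<in> enabled G l x \<Longrightarrow> \<epsilon> < prb G l l' x"
    using uniform_prb_lower_bound[OF fin locs] by blast
  obtain H where H: "\<forall>\<gamma> \<in> reachable G. ranking \<gamma> \<le> H"
    using fin by (meson finite_imageI finite_nat_set_iff_bounded_le imageI)
  have SI_ge_1_iff: "1 \<le> 1 - term_value \<gamma> \<longleftrightarrow> term_value \<gamma> = 0" for \<gamma>
    using term_value_nonneg[of \<gamma>] by auto
  show ?thesis
    using inductive_invariant_reachable init_state_reachable Pr_term_le_term_value assms(5)
      term_value_le_1 supermartingale_one_minus_term_value[OF locs] \<epsilon> H SI_ge_1_iff
      ranking_term_state ranking_decreasing_nonprob prb_mass_ranking_decreasing locs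
    by (intro exI[of _ "reachable G"] exI[of _ "\<lambda>\<sigma>. 1 - term_value \<sigma>"] exI[of _ \<epsilon>] exI[of _ ranking])
      (auto simp: ranking_zero)
qed

end
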